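(* For all $n\ge0$, $z(n)\in\{f(n),\ f(n)+n,\ f(n)+1,\ f(n)-n\}$.
   Context: $\mathbb{N}=\{0,1,2,\dots\}$. The sequence $f:\mathbb{N}\to\mathbb{N}$ is defined greedily: $f(0)=0$, and for $n\ge1$, $f(n)$ is the least natural number such that (i) $f(n)\notin\{f(0),f(1),\dots,f(n-1)\}$ and (ii) $\sum_{1\le i\le n} f(i)$ is divisible by $n$. The sequence $z:\mathbb{N}\to\mathbb{N}$ is defined greedily: $z(0)=0$, and for $n\ge1$, $z(n)$ is the least natural number such that (i) $z(n)\notin\{z(0),\dots,z(n-1)\}$ and (ii) $\sum_{2\le i\le n} z(i)$ is divisible by $n+1$ (the empty sum being $0$). *)

theory Defs
  imports Main
begin

fun fpre :: "nat \<Rightarrow> nat list" where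
  "fpre 0 = [0]"
| "fpre (Suc n) = fpre n @
     [LEAST v. v \<notin> set (fpre n) \<and> Suc n dvd sum_list (drop 1 (fpre n @ [v]))]"

definition f :: "nat \<Rightarrow> nat" where
  "f n = fpre n ! n"

fun zpre :: "nat \<Rightarrow> nat list" where
  "zpre 0 = [0]"
| "zpre (Suc n) = zpre n @
     [LEAST v. v \<notin> set (zpre n) \<and> (Suc n + 1) dvd sum_list (drop 2 (zpre n @ [v]))]"

definition z :: "nat \<Rightarrow> nat" where
  "z n = zpre n ! n"

end

(* Both greedy sequences follow one self-generating pattern. Call n a jump of f if f takes a
   large value at n, and let c be the number of jumps up to n. Then the first n + 1 values of f
   are 0, ..., c - 1, the large values j + g j for j < c (g enumerating the jumps), and c itself
   unless n is a jump; their sum is n * c. So f (n + 1) = c + n + 1 if n + 1 is a jump and c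
   otherwise, and g grows by 1 or 2 according to whether the index is itself a large value.
   The same holds for z with jumps h, large values j + h j + 1 and the extra value z 1 = 1.
   Each of g and h is 2m + 1 minus the number of its large values up to m; these numbers
   interlace, so g \<le> h \<le> g + 1. Hence the jump counts of f and z differ by at most one, which
   leaves exactly the four possibilities z = f, f + n, f + 1, f - n. *)

theory Submission
  imports Defs
begin

definition count_le :: "(nat \<Rightarrow> nat) \<Rightarrow> nat \<Rightarrow> nat" where
  "count_le r n = card {j. r j \<le> n}"

lemma less_count_le_iff:
  assumes "strict_mono r"
  shows "m < count_le r n \<longleftrightarrow> r m \<le> n"
proof -
  let ?S = "{j. r j \<le> n}"
  have down: "i \<in> ?S" if "j \<in> ?S" "i \<le> j" for i j
    using that strict_mono_less_eq[OF assms, of i j] by simp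
  have "?S \<subseteq> {..n}"
    using strict_mono_imp_increasing[OF assms] le_trans by blast
  then have "finite ?S" by (rule finite_subset) simp
  show ?thesis
  proof
    assume "r m \<le> n"
    then have "{..m} \<subseteq> ?S" using down[where j = m] by auto
    then have "card {..m} \<le> card ?S" by (rule card_mono[OF \<open>finite ?S\<close>])
    then show "m < count_le r n" by (simp add: count_le_def)
  next
    assume m: "m < count_le r n"
    show "r m \<le> n"
    proof (rule ccontr)
      assume "\<not> r m \<le> n"
      then have "?S \<subseteq> {..<m}" using down[where i = m] by (auto simp: not_less[symmetric])
      then have "card ?S \<le> card {..<m}" by (rule card_mono[rotated]) simp
      with m show False by (simp add: count_le_def)
    qed
  qed
qed

lemma Suc_in_range_iff_count_le:
  assumes "strict_mono r"
  shows "Suc n \<in> range r \<longleftrightarrow> r (count_le r n) = Suc n"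
proof
  assume "Suc n \<in> range r"
  then obtain k where k: "r k = Suc n" by auto
  have "\<not> k < count_le r n" using k less_count_le_iff[OF assms] by simp
  moreover have "\<not> count_le r n < k"
  proof
    assume "count_le r n < k"
    then have "r (count_le r n) \<le> n" using k strict_monoD[OF assms] by fastforce
    then show False using less_count_le_iff[OF assms] by blast
  qed
  ultimately show "r (count_le r n) = Suc n" using k by (simp add: nat_neq_iff)
qed (metis rangeI)

lemma count_le_Suc:
  assumes "strict_mono r"
  shows "count_le r (Suc n) = count_le r n + (if Suc n \<in> range r then 1 else 0)"
proof -
  let ?c = "count_le r n"
  let ?d = "?c + (if Suc n \<in> range r then 1 else 0)"
  have iff: "m < count_le r (Suc n) \<longleftrightarrow> m < ?d" for m
  proof -
    have "m < count_le r (Suc n) \<longleftrightarrow> r m \<le> n \<or> r m = Suc n"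
      using less_count_le_iff[OF assms] by (simp add: le_Suc_eq)
    also have "\<dots> \<longleftrightarrow> m < ?c \<or> (Suc n \<in> range r \<and> m = ?c)"
    proof (cases "Suc n \<in> range r")
      case True
      then show ?thesis using less_count_le_iff[OF assms] Suc_in_range_iff_count_le[OF assms, of n]
        strict_mono_eq[OF assms, of m ?c] by auto
    next
      case False
      then have "r m \<noteq> Suc n" by (metis rangeI)
      then show ?thesis using False less_count_le_iff[OF assms] by simp
    qed
    also have "\<dots> \<longleftrightarrow> m < ?d" by auto
    finally show ?thesis .
  qed
  show ?thesis using iff[of "count_le r (Suc n)"] iff[of ?d] by (simp add: not_less)
qed

lemma strict_mono_gt_self:
  fixes q :: "nat \<Rightarrow> nat"
  assumes "strict_mono q" "0 < q 0"
  shows "j < q j"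
proof (induction j)
  case (Suc j)
  then show ?case using strict_monoD[OF assms(1), of j "Suc j"] by simp
qed (fact assms(2))

lemma count_le_interlacing:
  assumes r: "strict_mono r" and s: "strict_mono s" and "0 < r 0" "0 < s 0"
    and interlaced: "\<And>j. j < n \<Longrightarrow> r j \<le> s j \<and> s j \<le> r (Suc j)"
  shows "count_le s n \<le> count_le r n \<and> count_le r n \<le> Suc (count_le s n)"
proof
  have below: "j < n" if "q j \<le> n" "strict_mono q" "0 < q 0" for q j
    using that strict_mono_gt_self[of q j] by linarith
  have "m < count_le r n" if "m < count_le s n" for m
    using that below[OF _ s \<open>0 < s 0\<close>, of m] interlaced[of m]
      less_count_le_iff[OF r] less_count_le_iff[OF s] by force
  from this[of "count_le r n"] show "count_le s n \<le> count_le r n" by (meson less_irrefl not_le)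
  let ?a = "count_le s n"
  show "count_le r n \<le> Suc ?a"
  proof (cases "?a < n")
    case True
    have "n < s ?a" using less_count_le_iff[OF s, of ?a n] by simp
    then have "n < r (Suc ?a)" using interlaced[OF True] by simp
    then show ?thesis using less_count_le_iff[OF r, of "Suc ?a" n] by simp
  next
    case False
    have "m < n" if "m < count_le r n" for m
      using that below[OF _ r \<open>0 < r 0\<close>] less_count_le_iff[OF r] by blast
    from this[of n] False show ?thesis by linarith
  qed
qed

lemma count_le_close_cases:
  assumes r: "strict_mono r" and s: "strict_mono s" and "0 < r 0"
    and close: "\<And>j. r j \<le> s j \<and> s j \<le> r j + 1"
  obtains "count_le r n = count_le s n" "Suc n \<in> range s \<Longrightarrow> Suc n \<in> range r"
  | "count_le r n = Suc (count_le s n)" "Suc n \<in> range s"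
proof -
  have "r j \<le> s j \<and> s j \<le> r (Suc j)" for j
    using close[of j] strict_monoD[OF r, of j "Suc j"] by simp
  moreover have "0 < s 0" using \<open>0 < r 0\<close> close[of 0] by linarith
  ultimately have bounds: "count_le s n \<le> count_le r n \<and> count_le r n \<le> Suc (count_le s n)"
    using \<open>0 < r 0\<close> by (intro count_le_interlacing[OF r s])
  show thesis
  proof (cases "count_le r n = count_le s n")
    case True
    have "Suc n \<in> range r" if "Suc n \<in> range s"
    proof -
      let ?c = "count_le r n"
      have "s ?c = Suc n" using that True Suc_in_range_iff_count_le[OF s] by simp
      moreover have "n < r ?c" using less_count_le_iff[OF r, of ?c n] by simp
      ultimately have "r ?c = Suc n" using close[of ?c] by simp
      then show ?thesis by (metis rangeI)
    qed
    with True that(1) show thesis by blast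
  next
    case False
    let ?e = "count_le s n"
    have c: "count_le r n = Suc ?e" using False bounds by simp
    have "r ?e \<le> n" using less_count_le_iff[OF r, of ?e n] c by simp
    moreover have "n < s ?e" using less_count_le_iff[OF s, of ?e n] by simp
    ultimately have "s ?e = Suc n" using close[of ?e] by simp
    then have "Suc n \<in> range s" by (metis rangeI)
    with c that(2) show thesis by blast
  qed
qed

lemma Least_fresh_dvd_eq:
  fixes c m :: nat
  assumes "{..<c} \<subseteq> U" "\<And>x. x \<in> U \<Longrightarrow> x < c + Suc m"
  shows "(LEAST v. v \<notin> U \<and> Suc m dvd m * c + v) = (if c \<in> U then c + Suc m else c)"
proof (rule Least_equality)
  show "(if c \<in> U then c + Suc m else c) \<notin> U \<and> Suc m dvd m * c + (if c \<in> U then c + Suc m else c)"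
  proof (cases "c \<in> U")
    case True
    have "m * c + (c + Suc m) = Suc m * (c + 1)" by simp
    then have "Suc m dvd m * c + (c + Suc m)" by (metis dvd_triv_left)
    then show ?thesis using True assms(2)[of "c + Suc m"] by auto
  next
    case False
    have "m * c + c = Suc m * c" by simp
    then show ?thesis using False by (metis dvd_triv_left)
  qed
next
  fix v assume v: "v \<notin> U \<and> Suc m dvd m * c + v"
  then have "c \<le> v" using assms(1) by (meson lessThan_iff not_le subsetD)
  then have "m * c + v = Suc m * c + (v - c)" by simp
  then have dvd: "Suc m dvd v - c" using v by (metis dvd_add_right_iff dvd_triv_left)
  show "(if c \<in> U then c + Suc m else c) \<le> v"
  proof (cases "c \<in> U")
    case True
    then have "0 < v - c" using v \<open>c \<le> v\<close> by (cases "v = c") auto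
    then have "Suc m \<le> v - c" using dvd by (rule dvd_imp_le[rotated])
    with True show ?thesis by simp
  next
    case False
    with \<open>c \<le> v\<close> show ?thesis by simp
  qed
qed

(* The common shape of f and z: if c = count_le jump n, the terms summed so far have mean c and
   the next term is c + Suc n + d when Suc n is a jump, otherwise c (next_value). value_set n
   is the set of the first n + 1 terms; E holds the values outside this pattern. jump is built
   through a list because its recursion refers to all earlier jumps. *)
locale greedy_jumps =
  fixes r0 d :: nat and E :: "nat set"
  assumes r0_pos: "0 < r0"
begin

fun jump_list :: "nat \<Rightarrow> nat list" where
  "jump_list 0 = [r0]"
| "jump_list (Suc m) = jump_list m @
     [jump_list m ! m + (if Suc m \<in> E \<union> (\<lambda>j. j + jump_list m ! j + d) ` {..m} then 1 else 2)]"

definition jump :: "nat \<Rightarrow> nat" where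
  "jump m = jump_list m ! m"

definition large_value :: "nat \<Rightarrow> nat" where
  "large_value j = j + jump j + d"

lemma length_jump_list: "length (jump_list m) = Suc m"
  by (induction m) auto

lemma nth_jump_list: "j \<le> m \<Longrightarrow> jump_list m ! j = jump j"
proof (induction m)
  case (Suc m)
  then show ?case
    by (cases "j = Suc m") (auto simp: jump_def nth_append length_jump_list)
qed (simp add: jump_def)

lemma jump_0: "jump 0 = r0"
  by (simp add: jump_def)

lemma jump_Suc_bounded: "jump (Suc m) = jump m + (if Suc m \<in> E \<union> large_value ` {..m} then 1 else 2)"
proof -
  have "(\<lambda>j. j + jump_list m ! j + d) ` {..m} = large_value ` {..m}"
    by (rule image_cong) (simp_all add: nth_jump_list large_value_def)
  then show ?thesis
    by (simp add: jump_def [of "Suc m"] nth_append length_jump_list nth_jump_list)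
qed

lemma strict_mono_jump: "strict_mono jump"
  unfolding strict_mono_Suc_iff by (simp add: jump_Suc_bounded)

lemma less_jump: "m < jump m"
  using strict_mono_gt_self[OF strict_mono_jump] by (simp add: jump_0 r0_pos)

lemma jump_Suc: "jump (Suc m) = jump m + (if Suc m \<in> E \<union> range large_value then 1 else 2)"
proof -
  have "Suc m \<in> range large_value \<longleftrightarrow> Suc m \<in> large_value ` {..m}"
  proof
    assume "Suc m \<in> range large_value"
    then obtain j where j: "Suc m = large_value j" by blast
    then have "j \<le> m" using less_jump[of j] by (simp add: large_value_def)
    with j show "Suc m \<in> large_value ` {..m}" by (simp add: image_eqI)
  qed auto
  then show ?thesis by (simp add: jump_Suc_bounded)
qed

lemma jump_add_card: "jump m + card ({1..m} \<inter> (E \<union> range large_value)) = r0 + 2 * m"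
proof (induction m)
  case (Suc m)
  let ?X = "E \<union> range large_value"
  have "{1..Suc m} \<inter> ?X =
    (if Suc m \<in> ?X then insert (Suc m) ({1..m} \<inter> ?X) else {1..m} \<inter> ?X)"
    by (auto simp: atLeastAtMostSuc_conv)
  then show ?case using Suc by (simp add: jump_Suc)
qed (simp add: jump_0)

lemma strict_mono_large_value: "strict_mono large_value"
  using strict_mono_jump by (simp add: strict_mono_def large_value_def add_strict_mono)

lemma jump_add_count_le:
  assumes "E \<inter> range large_value = {}"
  shows "jump m + card (E \<inter> {1..m}) + count_le large_value m = r0 + 2 * m"
proof -
  have "0 < large_value j" for j
    using less_jump[of j] by (simp add: large_value_def)
  then have "{1..m} \<inter> range large_value = large_value ` {j. large_value j \<le> m}"
    by (auto simp: Suc_le_eq)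
  then have "card ({1..m} \<inter> range large_value) = count_le large_value m"
    by (simp add: count_le_def card_image strict_mono_imp_inj_on[OF strict_mono_large_value])
  moreover have "card ({1..m} \<inter> (E \<union> range large_value)) =
      card (E \<inter> {1..m}) + card ({1..m} \<inter> range large_value)"
    using assms by (subst card_Un_disjoint[symmetric]) (auto intro: arg_cong[where f = card])
  ultimately show ?thesis using jump_add_card[of m] by simp
qed

lemma in_range_large_value_iff: "x \<in> range large_value \<longleftrightarrow> x \<in> large_value ` {..<x}"
proof
  assume "x \<in> range large_value"
  then obtain j where j: "x = large_value j" by blast
  then have "j < x" using less_jump[of j] by (simp add: large_value_def)
  with j show "x \<in> large_value ` {..<x}" by blast
qed blast

definition value_set :: "nat \<Rightarrow> nat set" where
  "value_set n = E \<union> {..<count_le jump n} \<union> large_value ` {..<count_le jump n}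
     \<union> (if n \<in> range jump then {} else {count_le jump n})"

lemma count_le_jump_0: "count_le jump 0 = 0"
proof -
  have "\<not> jump 0 \<le> 0" using r0_pos by (simp add: jump_0)
  then show ?thesis using less_count_le_iff[OF strict_mono_jump, of 0 0] by simp
qed

lemma value_set_0: "value_set 0 = insert 0 E"
proof -
  have "0 \<notin> range jump"
    using less_jump by (metis not_less0 rangeE)
  then show ?thesis by (auto simp: value_set_def count_le_jump_0)
qed

definition next_value :: "nat \<Rightarrow> nat" where
  "next_value n = (if Suc n \<in> range jump then count_le jump n + Suc n + d else count_le jump n)"

lemma mem_range_jump_iff:
  assumes "count_le jump n = Suc p"
  shows "n \<in> range jump \<longleftrightarrow> n = jump p"
proof
  assume "n \<in> range jump"
  then obtain k where k: "n = jump k" by blast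
  then have "k < Suc p" "p \<le> k"
    using assms less_count_le_iff[OF strict_mono_jump, of k n] less_count_le_iff[OF strict_mono_jump, of p n]
      strict_mono_less_eq[OF strict_mono_jump, of p k] by simp_all
  then show "n = jump p" using k by (simp add: less_Suc_eq_le)
qed (use assms less_count_le_iff[OF strict_mono_jump, of p n] in simp)

lemma Suc_in_range_jump_iff:
  assumes "r0 \<le> Suc n"
  shows "Suc n \<in> range jump \<longleftrightarrow> count_le jump n \<in> value_set n"
proof (cases "count_le jump n")
  case 0
  then have "n < jump 0" using less_count_le_iff[OF strict_mono_jump, of 0 n] by simp
  then have "jump 0 = Suc n" using assms by (simp add: jump_0)
  moreover have "n \<notin> range jump"
  proof
    assume "n \<in> range jump"
    then obtain k where "n = jump k" by blast
    then show False using \<open>n < jump 0\<close> strict_mono_less_eq[OF strict_mono_jump, of 0 k] by simp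
  qed
  ultimately show ?thesis by (auto simp: value_set_def 0 intro: range_eqI[of _ _ 0])
next
  case (Suc p)
  let ?c = "count_le jump n"
  have p: "jump p \<le> n" using less_count_le_iff[OF strict_mono_jump, of p n] Suc by simp
  have c: "n < jump ?c" using less_count_le_iff[OF strict_mono_jump, of ?c n] by simp
  note n = mem_range_jump_iff[OF Suc]
  have mem: "?c \<in> value_set n \<longleftrightarrow> n \<notin> range jump \<or> ?c \<in> E \<union> range large_value"
    using in_range_large_value_iff[of ?c] by (auto simp: value_set_def)
  have step: "jump ?c = jump p + (if ?c \<in> E \<union> range large_value then 1 else 2)"
    using jump_Suc[of p] Suc by simp
  note Suc_in_range = Suc_in_range_iff_count_le[OF strict_mono_jump, of n]
  show ?thesis
  proof (cases "n = jump p")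
    case True
    then show ?thesis using n mem step Suc_in_range by simp
  next
    case False
    then have "jump ?c = Suc n" using p c step by (simp split: if_splits)
    then show ?thesis using False n mem Suc_in_range by simp
  qed
qed

lemma large_value_count_le:
  assumes "Suc n \<in> range jump"
  shows "large_value (count_le jump n) = count_le jump n + Suc n + d"
  using assms Suc_in_range_iff_count_le[OF strict_mono_jump] by (simp add: large_value_def)

lemma value_set_Suc:
  assumes "r0 \<le> Suc n"
  shows "value_set (Suc n) = insert (next_value n) (value_set n)"
proof (cases "Suc n \<in> range jump")
  case True
  have "count_le jump n \<in> value_set n" using True Suc_in_range_jump_iff[OF assms] by simp
  then show ?thesis
    using True large_value_count_le[OF True]
    by (auto simp: value_set_def next_value_def count_le_Suc[OF strict_mono_jump] lessThan_Suc)
next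
  case False
  then show ?thesis
    by (auto simp: value_set_def next_value_def count_le_Suc[OF strict_mono_jump])
qed

lemma value_set_less:
  assumes "E \<subseteq> {..n}" "x \<in> value_set n"
  shows "x < count_le jump n + Suc n + d"
proof -
  let ?c = "count_le jump n"
  from assms(2) consider "x \<in> E" | "x \<le> ?c" | j where "j < ?c" "x = large_value j"
    by (auto simp: value_set_def split: if_splits)
  then show ?thesis
  proof cases
    case 3
    then have "jump j \<le> n" using less_count_le_iff[OF strict_mono_jump] by simp
    then show ?thesis using 3 by (simp add: large_value_def)
  qed (use assms(1) in auto)
qed

lemma Least_fresh_value_set:
  assumes "r0 \<le> Suc n" "E \<subseteq> {..n}"
  shows "(LEAST v. v \<notin> value_set n \<and> Suc (n + d) dvd (n + d) * count_le jump n + v) = next_value n"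
proof -
  have "{..<count_le jump n} \<subseteq> value_set n" by (auto simp: value_set_def)
  moreover have "x < count_le jump n + Suc (n + d)" if "x \<in> value_set n" for x
    using value_set_less[OF assms(2) that] by simp
  ultimately have "(LEAST v. v \<notin> value_set n \<and> Suc (n + d) dvd (n + d) * count_le jump n + v) =
      (if count_le jump n \<in> value_set n then count_le jump n + Suc (n + d) else count_le jump n)"
    by (rule Least_fresh_dvd_eq)
  then show ?thesis using Suc_in_range_jump_iff[OF assms(1)] by (simp add: next_value_def)
qed

lemma next_value_sum:
  "(n + d) * count_le jump n + next_value n = (Suc n + d) * count_le jump (Suc n)"
  by (simp add: next_value_def count_le_Suc[OF strict_mono_jump] algebra_simps)

end

(* Suc 0 instead of 1: the simplifier rewrites 1 :: nat to Suc 0, also inside F.jump etc. *)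
interpretation F: greedy_jumps "Suc 0" 0 "{}"
  by unfold_locales simp

interpretation Z: greedy_jumps 2 "Suc 0" "{Suc 0}"
  by unfold_locales simp

lemma length_fpre: "length (fpre n) = Suc n"
  by (induction n) auto

lemma length_zpre: "length (zpre n) = Suc n"
  by (induction n) auto

lemma fpre_values_and_sum:
  "set (fpre n) = F.value_set n \<and> sum_list (drop 1 (fpre n)) = n * count_le F.jump n"
proof (induction n)
  case 0
  show ?case by (simp add: F.value_set_0)
next
  case (Suc n)
  have "sum_list (drop 1 (fpre n @ [v])) = n * count_le F.jump n + v" for v
    using Suc.IH length_fpre[of n] by simp
  then have "fpre (Suc n) = fpre n @ [F.next_value n]"
    using Suc.IH F.Least_fresh_value_set[of n] by simp
  then show ?case
    using Suc.IH F.value_set_Suc[of n] F.next_value_sum[of n] length_fpre[of n] by simp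
qed

lemma f_Suc: "f (Suc n) = F.next_value n"
  using fpre_values_and_sum[of n] F.Least_fresh_value_set[of n] length_fpre[of n]
  by (simp add: f_def nth_append)

lemma f_1: "f 1 = 1"
proof -
  have "Suc 0 \<in> range F.jump" by (metis F.jump_0 rangeI)
  then show ?thesis using f_Suc[of 0] by (simp add: F.next_value_def F.count_le_jump_0)
qed

lemma Least_pos_nat: "(LEAST v::nat. 0 < v) = 1"
  by (rule Least_equality) auto

lemma zpre_values_and_sum:
  assumes "1 \<le> n"
  shows "set (zpre n) = Z.value_set n \<and> sum_list (drop 2 (zpre n)) = Suc n * count_le Z.jump n"
  using assms
proof (induction n rule: dec_induct)
  case base
  have "count_le Z.jump 1 = 0"
    using less_count_le_iff[OF Z.strict_mono_jump, of 0 1] by (simp add: Z.jump_0)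
  moreover have "1 \<notin> range Z.jump"
  proof
    assume "1 \<in> range Z.jump"
    then obtain k where "1 = Z.jump k" by blast
    then show False using Z.jump_0 strict_mono_less_eq[OF Z.strict_mono_jump, of 0 k] by simp
  qed
  ultimately show ?case by (auto simp: Least_pos_nat Z.value_set_def)
next
  case (step n)
  have "sum_list (drop 2 (zpre n @ [v])) = Suc n * count_le Z.jump n + v" for v
    using step length_zpre[of n] by simp
  then have "zpre (Suc n) = zpre n @ [Z.next_value n]"
    using step Z.Least_fresh_value_set[of n] by simp
  then show ?case
    using step Z.value_set_Suc[of n] Z.next_value_sum[of n] length_zpre[of n] by simp
qed

lemma z_Suc:
  assumes "1 \<le> n"
  shows "z (Suc n) = Z.next_value n"
  using zpre_values_and_sum[OF assms] Z.Least_fresh_value_set[of n] assms length_zpre[of n]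
  by (simp add: z_def nth_append)

lemma z_1: "z 1 = 1"
  by (simp add: z_def Least_pos_nat)

lemma F_jump_le_Z_jump: "F.jump m \<le> Z.jump m \<and> Z.jump m \<le> F.jump m + 1"
proof (induction m rule: less_induct)
  case (less m)
  show ?case
  proof (cases "m = 0")
    case True
    then show ?thesis by (simp add: F.jump_0 Z.jump_0)
  next
    case False
    have "Suc 0 \<notin> range Z.large_value" by (auto simp: Z.large_value_def Z.jump_0)
    then have Z: "Z.jump m + count_le Z.large_value m = 2 * m + 1"
      using Z.jump_add_count_le[of m] False by auto
    have F: "F.jump m + count_le F.large_value m = 2 * m + 1"
      using F.jump_add_count_le[of m] by simp
    have "F.large_value j \<le> Z.large_value j \<and> Z.large_value j \<le> F.large_value (Suc j)"
      if "j < m" for j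
      using less.IH[OF that] F.strict_mono_jump[THEN strict_monoD, of j "Suc j"]
      by (simp add: F.large_value_def Z.large_value_def)
    then have "count_le Z.large_value m \<le> count_le F.large_value m \<and>
        count_le F.large_value m \<le> Suc (count_le Z.large_value m)"
      by (intro count_le_interlacing F.strict_mono_large_value Z.strict_mono_large_value)
         (simp_all add: F.large_value_def Z.large_value_def F.jump_0 Z.jump_0)
    then show ?thesis using F Z by linarith
  qed
qed

theorem theorem6:
  fixes n :: nat
  shows "int (z n) \<in> {int (f n), int (f n) + int n, int (f n) + 1, int (f n) - int n}"
proof -
  consider "n = 0" | "n = 1" | k where "n = Suc k" "1 \<le> k"
    by (cases "n \<le> 1") (auto simp: le_Suc_eq, metis Suc_pred)
  then show ?thesis
  proof cases
    case 1
    then show ?thesis by (simp add: f_def z_def)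
  next
    case 2
    then show ?thesis using f_1 z_1 by simp
  next
    case 3
    have "0 < F.jump 0" by (simp add: F.jump_0)
    with count_le_close_cases[OF F.strict_mono_jump Z.strict_mono_jump _ F_jump_le_Z_jump]
    consider
        "count_le F.jump k = count_le Z.jump k" "Suc k \<in> range Z.jump \<Longrightarrow> Suc k \<in> range F.jump"
      | "count_le F.jump k = Suc (count_le Z.jump k)" "Suc k \<in> range Z.jump"
      by blast
    then show ?thesis
      using f_Suc[of k] z_Suc[OF \<open>1 \<le> k\<close>] \<open>n = Suc k\<close>
      unfolding F.next_value_def Z.next_value_def
      by cases (cases "Suc k \<in> range F.jump"; cases "Suc k \<in> range Z.jump"; simp)+
  qed
qed

end
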